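(* Assume $\nu>1/2$ and let $b,\theta>0$ be fixed. For any continuous function $F:\mathbb R\to[0,\infty)$ with $0<\int_{-\infty}^\infty F(x)\,dx<\infty$, as $\delta\to0$, $$\int_{-\pi}^{\pi}a^\delta_{b,\theta}(\lambda)\,F\!\Big(\frac{\lambda}{\delta\theta}\Big)d\lambda\sim\delta\theta\int_{-\infty}^{\infty}F(x)\,dx,\qquad \int_{-\pi}^{\pi}\big[a^\delta_{b,\theta}(\lambda)\big]^2F\!\Big(\frac{\lambda}{\delta\theta}\Big)d\lambda\sim\delta\theta\int_{-\infty}^{\infty}F(x)\,dx.$$
   Context: For $\alpha>0$, $\omega\in\mathbb R$ let $g^*_{\nu,\alpha}(\omega)=C_\nu\alpha^{2\nu}(\alpha^2+\omega^2)^{-(\nu+1/2)}$ with $C_\nu=\Gamma(\nu+\frac12)/(\sqrt\pi\,\Gamma(\nu))$. For $\delta,\theta>0$ and $\lambda\in[-\pi,\pi]$ let $g^\delta_{\nu,\theta}(\lambda)=\sum_{k\in\mathbb Z}g^*_{\nu,\delta\theta}(\lambda+2k\pi)$, and for $b>0$, $a^\delta_{b,\theta}=\dfrac{b\,g^\delta_{\nu,\theta}}{b\,g^\delta_{\nu,\theta}+(2\pi)^{-1}}$. "$\sim$" means the ratio tends to $1$. *)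

theory Defs
  imports "HOL-Analysis.Analysis" "HOL-Library.Landau_Symbols"
begin

definition C_nu :: "real \<Rightarrow> real" where
  "C_nu \<nu> = Gamma (\<nu> + 1/2) / (sqrt pi * Gamma \<nu>)"

definition g_star :: "real \<Rightarrow> real \<Rightarrow> real \<Rightarrow> real" where
  "g_star \<nu> \<alpha> \<omega> = C_nu \<nu> * \<alpha> powr (2*\<nu>) * (\<alpha>^2 + \<omega>^2) powr (-(\<nu> + 1/2))"

definition g_delta :: "real \<Rightarrow> real \<Rightarrow> real \<Rightarrow> real \<Rightarrow> real" where
  "g_delta \<nu> \<delta> \<theta> l = (\<Sum>\<^sub>\<infinity>k::int. g_star \<nu> (\<delta>*\<theta>) (l + 2 * of_int k * pi))"

definition a_delta :: "real \<Rightarrow> real \<Rightarrow> real \<Rightarrow> real \<Rightarrow> real \<Rightarrow> real" where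
  "a_delta \<nu> \<delta> b \<theta> l =
     b * g_delta \<nu> \<delta> \<theta> l / (b * g_delta \<nu> \<delta> \<theta> l + 1 / (2*pi))"

end

theory Submission
  imports Defs
begin

(* Write c = delta*theta.  The substitution l = c*x turns the integral over [-pi,pi] of
   (a^delta)^p * F(l/c) into c times the integral over the real line of
   1_{[-pi,pi]}(c x) * a^delta(c x)^p * F(x).  Since the periodised spectral density
   g^delta dominates its k = 0 term g*_{nu,c}, and g*_{nu,c}(c x) = C_nu (1+x^2)^(-nu-1/2) / c
   blows up like 1/c, we get 0 <= 1 - a^delta(c x) <= K(x) * delta, so the rescaled integrand
   tends to F(x) pointwise while staying below F.  Dominated convergence (along at_right 0)
   then shows that the integral divided by c tends to the integral of F, which is the claimed
   asymptotic equivalence for every power p, in particular p = 1 and p = 2. *)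

lemma C_nu_pos: "\<nu> > 0 \<Longrightarrow> C_nu \<nu> > 0"
  unfolding C_nu_def by (auto intro!: divide_pos_pos mult_pos_pos)

lemma g_star_nonneg: "\<alpha> > 0 \<Longrightarrow> \<nu> > 0 \<Longrightarrow> g_star \<nu> \<alpha> \<omega> \<ge> 0"
  unfolding g_star_def using C_nu_pos[of \<nu>] by auto

text \<open>For \<open>|l| \<le> pi\<close> and \<open>k \<noteq> 0\<close> the shifted frequency \<open>l + 2k pi\<close> has modulus at least \<open>|k|\<close>,
  so the \<open>k\<close>-th term of the periodisation decays at least like \<open>1/k\<^sup>2\<close> once \<open>\<nu> + 1/2 \<ge> 1\<close>.\<close>

lemma shifted_frequency_ge:
  fixes l :: real and k :: int
  assumes "\<bar>l\<bar> \<le> pi" "k \<noteq> 0"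
  shows "\<bar>real_of_int k\<bar> \<le> \<bar>l + 2 * of_int k * pi\<bar>"
proof -
  have k1: "1 \<le> \<bar>real_of_int k\<bar>" using assms(2) by linarith
  have "\<bar>real_of_int k\<bar> \<le> \<bar>real_of_int k\<bar> * pi"
    using k1 pi_gt3 by (simp add: mult_le_cancel_left1)
  also have "\<dots> \<le> 2 * \<bar>real_of_int k\<bar> * pi - pi"
    using k1 pi_gt3 by (simp add: algebra_simps)
  also have "\<dots> \<le> \<bar>l + 2 * of_int k * pi\<bar>"
    using assms(1) pi_gt_zero by (simp add: abs_mult)
  finally show ?thesis .
qed

lemma periodised_term_bound:
  fixes \<alpha> \<nu> l :: real and k :: int
  assumes "\<nu> > 1/2" "\<bar>l\<bar> \<le> pi" "k \<noteq> 0"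
  shows "(\<alpha>^2 + (l + 2 * of_int k * pi)^2) powr (-(\<nu>+1/2)) \<le> 2 / (real_of_int k^2 + 1)"
proof -
  define B where "B = \<alpha>^2 + (l + 2 * of_int k * pi)^2"
  have "real_of_int k^2 \<le> (l + 2 * of_int k * pi)^2"
    using shifted_frequency_ge[OF assms(2,3)] by (metis abs_ge_zero power2_abs power_mono)
  then have kB: "real_of_int k^2 \<le> B" unfolding B_def by (smt (verit) zero_le_power2)
  have "1 \<le> \<bar>real_of_int k\<bar>^2" using assms(3) by (intro one_le_power) linarith
  then have k2: "1 \<le> real_of_int k^2" by simp
  have B1: "1 \<le> B" using kB k2 by linarith
  have "B powr (-(\<nu>+1/2)) \<le> B powr (-1)"
    using assms(1) B1 by (intro powr_mono) auto
  also have "\<dots> = 1 / B" using B1 by (simp add: powr_minus_divide)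
  also have "\<dots> \<le> 1 / real_of_int k^2"
    using kB k2 by (intro divide_left_mono mult_pos_pos) auto
  also have "\<dots> \<le> 2 / (real_of_int k^2 + 1)" using k2 by (simp add: divide_simps)
  finally show ?thesis unfolding B_def .
qed

lemma summable_on_int_from_halves:
  fixes f :: "int \<Rightarrow> 'a::{uniform_topological_group_add, topological_comm_monoid_add,
                               ab_group_add, complete_uniform_space}"
  assumes "(\<lambda>n. f (int n)) summable_on UNIV" "(\<lambda>n. f (- int n)) summable_on UNIV"
  shows "f summable_on UNIV"
proof -
  have pos: "f summable_on range int"
    using assms(1) by (subst summable_on_reindex) (auto simp: o_def)
  have neg: "f summable_on range (\<lambda>n. - int n)"
    using assms(2) by (subst summable_on_reindex) (auto simp: o_def inj_on_def)
  have "UNIV = range int \<union> range (\<lambda>n. - int n)"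
    by (auto simp: image_iff) (metis int_nat_eq minus_minus nat_0_le neg_0_le_iff_le nle_le)
  then show ?thesis using summable_on_union[OF pos neg] by simp
qed

lemma summable_on_inverse_square_int:
  "(\<lambda>k::int. 2 / (real_of_int k^2 + 1)) summable_on UNIV"
proof -
  have "summable (\<lambda>n::nat. 2 / (real n^2 + 1))"
  proof (rule summable_comparison_test'[of "\<lambda>n::nat. 2 * inverse (real n ^ 2)" 1])
    show "summable (\<lambda>n::nat. 2 * inverse (real n ^ 2))"
      using inverse_power_summable[of 2, where 'a=real] by (intro summable_mult) auto
  qed (simp add: divide_simps, smt (verit) zero_le_power2)
  then have "(\<lambda>n::nat. 2 / (real n^2 + 1)) summable_on UNIV"
    by (subst summable_on_UNIV_nonneg_real_iff) auto
  then show ?thesis by (intro summable_on_int_from_halves) simp_all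
qed

lemma periodised_summable:
  assumes "\<alpha> > 0" "\<nu> > 1/2" "\<bar>l\<bar> \<le> pi"
  shows "(\<lambda>k::int. g_star \<nu> \<alpha> (l + 2 * of_int k * pi)) summable_on UNIV"
proof -
  define M where "M = C_nu \<nu> * \<alpha> powr (2*\<nu>)"
  have M: "M \<ge> 0" unfolding M_def using C_nu_pos[of \<nu>] assms by auto
  have "(\<lambda>k::int. g_star \<nu> \<alpha> (l + 2 * of_int k * pi)) summable_on (UNIV - {0})"
  proof (rule summable_on_comparison_test)
    show "(\<lambda>k::int. M * (2 / (real_of_int k^2 + 1))) summable_on (UNIV - {0})"
      by (rule summable_on_subset[OF summable_on_cmult_right[OF summable_on_inverse_square_int]])
         auto
    fix k :: int assume "k \<in> UNIV - {0}"
    then show "g_star \<nu> \<alpha> (l + 2 * of_int k * pi) \<le> M * (2 / (real_of_int k^2 + 1))"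
      unfolding g_star_def M_def[symmetric] using periodised_term_bound[OF assms(2,3), of k \<alpha>] M
      by (intro mult_left_mono) auto
    show "0 \<le> g_star \<nu> \<alpha> (l + 2 * of_int k * pi)" using g_star_nonneg assms by auto
  qed
  then show ?thesis
    by (metis insert_Diff_single insert_UNIV summable_on_insert_iff)
qed

lemma g_star_le_g_delta:
  assumes "\<delta>*\<theta> > 0" "\<nu> > 1/2" "\<bar>l\<bar> \<le> pi"
  shows "g_star \<nu> (\<delta>*\<theta>) l \<le> g_delta \<nu> \<delta> \<theta> l"
proof -
  have "(\<Sum>k\<in>{0::int}. g_star \<nu> (\<delta>*\<theta>) (l + 2 * of_int k * pi)) \<le> g_delta \<nu> \<delta> \<theta> l"
    unfolding g_delta_def
    by (rule finite_sum_le_has_sum[OF has_sum_infsum[OF periodised_summable[OF assms]]])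
       (use g_star_nonneg assms in auto)
  then show ?thesis by simp
qed

lemma g_star_rescaled:
  assumes "\<alpha> > 0"
  shows "g_star \<nu> \<alpha> (\<alpha>*x) = C_nu \<nu> / \<alpha> * (1+x^2) powr (-(\<nu>+1/2))"
proof -
  have "\<alpha>^2 + (\<alpha>*x)^2 = \<alpha>^2 * (1+x^2)" by (simp add: algebra_simps power_mult_distrib)
  then have "(\<alpha>^2 + (\<alpha>*x)^2) powr (-(\<nu>+1/2)) = (\<alpha>^2) powr (-(\<nu>+1/2)) * (1+x^2) powr (-(\<nu>+1/2))"
    by (simp add: powr_mult)
  also have "(\<alpha>^2) powr (-(\<nu>+1/2)) = \<alpha> powr (-(2*\<nu>+1))"
    using assms by (simp add: powr_powr flip: powr_numeral)
  finally have "(\<alpha>^2 + (\<alpha>*x)^2) powr (-(\<nu>+1/2)) = \<alpha> powr (-(2*\<nu>+1)) * (1+x^2) powr (-(\<nu>+1/2))" .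
  moreover have "\<alpha> powr (2*\<nu>) * \<alpha> powr (-(2*\<nu>+1)) = 1/\<alpha>"
    using assms by (simp add: powr_add[symmetric] powr_minus_divide)
  ultimately show ?thesis
    unfolding g_star_def by (metis mult.assoc times_divide_eq_right mult.right_neutral)
qed

lemma a_delta_bounds:
  assumes "\<delta>*\<theta> > 0" "\<nu> > 1/2" "\<bar>l\<bar> \<le> pi" "b > 0"
  shows "0 \<le> a_delta \<nu> \<delta> b \<theta> l" "a_delta \<nu> \<delta> b \<theta> l \<le> 1"
    and "g_star \<nu> (\<delta>*\<theta>) l > 0 \<Longrightarrow>
           1 - a_delta \<nu> \<delta> b \<theta> l \<le> (1/(2*pi)) / (b * g_star \<nu> (\<delta>*\<theta>) l)"
proof -
  let ?G = "g_delta \<nu> \<delta> \<theta> l" and ?g = "g_star \<nu> (\<delta>*\<theta>) l"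
  have G: "?g \<le> ?G" by (rule g_star_le_g_delta[OF assms(1-3)])
  have bG: "b * ?G \<ge> 0" using g_star_nonneg[of "\<delta>*\<theta>" \<nu> l] G assms by auto
  have c: "1/(2*pi) > 0" by simp
  show "0 \<le> a_delta \<nu> \<delta> b \<theta> l" unfolding a_delta_def using bG c by auto
  have den: "b * ?G + 1/(2*pi) > 0" using bG c by linarith
  show "a_delta \<nu> \<delta> b \<theta> l \<le> 1" unfolding a_delta_def using den by (simp add: pos_divide_le_eq)
  assume gp: "?g > 0"
  have bGp: "b * ?G > 0" using gp G assms(4) by (intro mult_pos_pos) auto
  have "1 - a_delta \<nu> \<delta> b \<theta> l = (1/(2*pi)) / (b * ?G + 1/(2*pi))"
    unfolding a_delta_def using den by (simp add: field_simps)
  also have "\<dots> \<le> (1/(2*pi)) / (b * ?G)"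
    using bGp den by (intro divide_left_mono) simp_all
  also have "\<dots> \<le> (1/(2*pi)) / (b * ?g)"
    using G gp bGp assms(4) by (intro divide_left_mono mult_left_mono mult_pos_pos) auto
  finally show "1 - a_delta \<nu> \<delta> b \<theta> l \<le> (1/(2*pi)) / (b * ?g)" .
qed

lemma eventually_rescaled_in_period:
  assumes "\<theta> > 0"
  shows "\<forall>\<^sub>F \<delta> in at_right 0. \<delta> > 0 \<and> \<bar>\<delta>*\<theta>*x\<bar> \<le> pi"
proof -
  have "((\<lambda>\<delta>. \<bar>\<delta>*\<theta>*x\<bar>) \<longlongrightarrow> \<bar>0*\<theta>*x\<bar>) (at_right 0)"
    by (intro tendsto_intros)
  then have "\<forall>\<^sub>F \<delta> in at_right 0. \<bar>\<delta>*\<theta>*x\<bar> < pi"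
    by (rule order_tendstoD) simp
  then show ?thesis
    using eventually_at_right_less[of 0] by eventually_elim auto
qed

text \<open>On the scale \<open>\<delta>\<theta>\<close> the filter tends to \<open>1\<close>: indeed \<open>0 \<le> 1 - a \<le> K \<delta>\<close>.\<close>

lemma a_delta_rescaled_tendsto_1:
  assumes "\<nu> > 1/2" "b > 0" "\<theta> > 0"
  shows "((\<lambda>\<delta>. a_delta \<nu> \<delta> b \<theta> (\<delta>*\<theta>*x)) \<longlongrightarrow> 1) (at_right 0)"
proof (rule tendsto_sandwich)
  define P where "P = (1+x^2) powr (-(\<nu>+1/2))"
  have "1 + x^2 > 0" by (simp add: add_pos_nonneg)
  then have P: "P > 0" unfolding P_def by simp
  have C: "C_nu \<nu> > 0" using C_nu_pos assms by auto
  define K where "K = (1/(2*pi)) * \<theta> / (b * C_nu \<nu> * P)"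
  show "((\<lambda>\<delta>. 1 - K * \<delta>) \<longlongrightarrow> 1) (at_right 0)"
    by (rule tendsto_eq_intros | simp)+
  have bounds: "1 - K * \<delta> \<le> a_delta \<nu> \<delta> b \<theta> (\<delta>*\<theta>*x) \<and> a_delta \<nu> \<delta> b \<theta> (\<delta>*\<theta>*x) \<le> 1"
    if d: "\<delta> > 0" "\<bar>\<delta>*\<theta>*x\<bar> \<le> pi" for \<delta>
  proof -
    have dt: "\<delta>*\<theta> > 0" using d assms by simp
    have gs: "g_star \<nu> (\<delta>*\<theta>) (\<delta>*\<theta>*x) = C_nu \<nu> / (\<delta>*\<theta>) * P"
      using g_star_rescaled[OF dt, of \<nu> x] unfolding P_def by simp
    have "1 - a_delta \<nu> \<delta> b \<theta> (\<delta>*\<theta>*x) \<le> (1/(2*pi)) / (b * (C_nu \<nu> / (\<delta>*\<theta>) * P))"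
      using a_delta_bounds(3)[OF dt assms(1) d(2) assms(2)] C P dt unfolding gs by simp
    also have "\<dots> = K * \<delta>" unfolding K_def using C P d assms by (simp add: field_simps)
    finally show ?thesis using a_delta_bounds(2)[OF dt assms(1) d(2) assms(2)] by simp
  qed
  have "\<forall>\<^sub>F \<delta> in at_right 0. 1 - K * \<delta> \<le> a_delta \<nu> \<delta> b \<theta> (\<delta>*\<theta>*x) \<and>
                                   a_delta \<nu> \<delta> b \<theta> (\<delta>*\<theta>*x) \<le> 1"
    using eventually_rescaled_in_period[OF assms(3), of x] by eventually_elim (use bounds in blast)
  then show "\<forall>\<^sub>F \<delta> in at_right 0. 1 - K * \<delta> \<le> a_delta \<nu> \<delta> b \<theta> (\<delta>*\<theta>*x)"
    and "\<forall>\<^sub>F \<delta> in at_right 0. a_delta \<nu> \<delta> b \<theta> (\<delta>*\<theta>*x) \<le> 1"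
    by (auto elim: eventually_mono)
qed simp

lemma filterlim_symmetric_int_segments:
  "filterlim (\<lambda>n::nat. {-int n..int n}) (finite_subsets_at_top (UNIV::int set)) sequentially"
  unfolding filterlim_finite_subsets_at_top
proof safe
  fix X :: "int set" assume "finite X"
  then obtain m where m: "\<forall>k \<in> X. nat \<bar>k\<bar> < m"
    using finite_nat_set_iff_bounded[of "(\<lambda>k. nat \<bar>k\<bar>) ` X"] by auto
  show "\<forall>\<^sub>F n in sequentially. finite {-int n..int n} \<and> X \<subseteq> {-int n..int n} \<and> {-int n..int n} \<subseteq> UNIV"
    using eventually_ge_at_top[of m] by eventually_elim (use m in force)
qed

lemma has_sum_int_symmetric_partial_sums:
  assumes "(f has_sum S) (UNIV::int set)"
  shows "(\<lambda>n::nat. sum f {-int n..int n}) \<longlonglongrightarrow> S"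
  using assms unfolding has_sum_def by (rule filterlim_compose[OF _ filterlim_symmetric_int_segments])

text \<open>On \<open>[-pi,pi]\<close> the filter is the pointwise limit of the measurable functions obtained by
  truncating the periodisation; hence it is Borel measurable there.\<close>

lemma a_delta_power_measurable:
  assumes "\<nu> > 1/2" "b > 0" "\<delta>*\<theta> > 0"
  shows "(\<lambda>l. indicator {-pi..pi} l * (a_delta \<nu> \<delta> b \<theta> l)^p) \<in> borel_measurable borel"
proof (rule borel_measurable_LIMSEQ_real)
  define G where "G n l = (\<Sum>k\<in>{-int n..int n}. g_star \<nu> (\<delta>*\<theta>) (l + 2 * of_int k * pi))" for n l
  define u where "u n l = indicator {-pi..pi} l * (b * G n l / (b * G n l + 1/(2*pi)))^p" for n l
  show "u n \<in> borel_measurable borel" for n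
    unfolding u_def G_def g_star_def by measurable
  fix l :: real
  show "(\<lambda>n. u n l) \<longlonglongrightarrow> indicator {-pi..pi} l * (a_delta \<nu> \<delta> b \<theta> l)^p"
  proof (cases "l \<in> {-pi..pi}")
    case True
    then have l: "\<bar>l\<bar> \<le> pi" by auto
    have G: "(\<lambda>n. G n l) \<longlonglongrightarrow> g_delta \<nu> \<delta> \<theta> l"
      unfolding G_def g_delta_def
      by (rule has_sum_int_symmetric_partial_sums[OF has_sum_infsum[OF periodised_summable[OF assms(3,1) l]]])
    have "0 \<le> g_delta \<nu> \<delta> \<theta> l"
      using g_star_nonneg[of "\<delta>*\<theta>" \<nu> l] g_star_le_g_delta[OF assms(3,1) l] assms by linarith
    then have den: "b * g_delta \<nu> \<delta> \<theta> l + 1/(2*pi) \<noteq> 0"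
      using assms(2) by (smt (verit) mult_nonneg_nonneg pi_gt_zero divide_pos_pos)
    show ?thesis unfolding u_def a_delta_def by (intro tendsto_intros G den)
  qed (simp add: u_def)
qed

lemma lbint_rescaled_weight:
  fixes g F :: "real \<Rightarrow> real"
  assumes "c > 0"
  shows "(LBINT l=-pi..pi. g l * F (l / c)) =
           c * (\<integral>x. indicator {-pi..pi} (c*x) * g (c*x) * F x \<partial>lborel)"
proof -
  have "(LBINT l=-pi..pi. g l * F (l / c)) = (\<integral>l. indicator {-pi..pi} l * g l * F (l / c) \<partial>lborel)"
    by (simp add: interval_integral_Icc set_lebesgue_integral_def mult.assoc)
  also have "\<dots> = \<bar>c\<bar> *\<^sub>R (\<integral>x. indicator {-pi..pi} (0 + c*x) * g (0 + c*x) * F ((0 + c*x) / c) \<partial>lborel)"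
    using assms by (intro lborel_integral_real_affine) auto
  also have "\<dots> = c * (\<integral>x. indicator {-pi..pi} (c*x) * g (c*x) * F x \<partial>lborel)"
    using assms by simp
  finally show ?thesis .
qed

lemma integral_dominated_convergence_at_right:
  fixes h :: "real \<Rightarrow> 'a \<Rightarrow> real"
  assumes meas: "\<And>\<delta>. \<delta> > 0 \<Longrightarrow> h \<delta> \<in> borel_measurable M" and f: "f \<in> borel_measurable M"
    and w: "integrable M w"
    and lim: "\<And>x. x \<in> space M \<Longrightarrow> ((\<lambda>\<delta>. h \<delta> x) \<longlongrightarrow> f x) (at_right 0)"
    and bound: "\<And>\<delta> x. \<delta> > 0 \<Longrightarrow> x \<in> space M \<Longrightarrow> norm (h \<delta> x) \<le> w x"
  shows "((\<lambda>\<delta>. integral\<^sup>L M (h \<delta>)) \<longlongrightarrow> integral\<^sup>L M f) (at_right 0)"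
proof (rule tendsto_at_right_sequentially[of 0 1])
  fix S :: "nat \<Rightarrow> real" assume pos: "\<And>n. 0 < S n" and "S \<longlonglongrightarrow> 0"
  moreover have "\<forall>n. S n \<in> {0<..} \<and> S n \<noteq> 0" using pos by (metis greaterThan_iff order_less_irrefl)
  ultimately have S: "filterlim S (at_right 0) sequentially"
    by (auto simp: filterlim_at intro: always_eventually)
  show "(\<lambda>n. integral\<^sup>L M (h (S n))) \<longlonglongrightarrow> integral\<^sup>L M f"
  proof (rule integral_dominated_convergence[OF f _ w])
    show "h (S n) \<in> borel_measurable M" for n using meas pos by blast
    show "AE x in M. (\<lambda>n. h (S n) x) \<longlonglongrightarrow> f x"
      by (intro AE_I2 filterlim_compose[OF lim S])
    show "AE x in M. norm (h (S n) x) \<le> w x" for n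
      using bound pos by (intro AE_I2) blast
  qed
qed simp

text \<open>After the substitution \<open>l = \<delta>\<theta>x\<close>, the integrand converges to \<open>F\<close> and is dominated by it.\<close>

lemma rescaled_integral_tendsto:
  assumes nu: "\<nu> > 1/2" and b: "b > 0" and th: "\<theta> > 0"
    and Fint: "integrable lborel F" and F0: "\<And>x. F x \<ge> 0"
  shows "((\<lambda>\<delta>. \<integral>x. indicator {-pi..pi} (\<delta>*\<theta>*x) * (a_delta \<nu> \<delta> b \<theta> (\<delta>*\<theta>*x))^p * F x \<partial>lborel)
           \<longlongrightarrow> integral\<^sup>L lborel F) (at_right 0)"
proof (rule integral_dominated_convergence_at_right[OF _ _ Fint])
  show "F \<in> borel_measurable lborel" using Fint by (rule borel_measurable_integrable)
  fix \<delta> :: real assume "\<delta> > 0"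
  then have dt: "\<delta>*\<theta> > 0" using th by simp
  have "(\<lambda>x. (\<lambda>l. indicator {-pi..pi} l * (a_delta \<nu> \<delta> b \<theta> l)^p) (\<delta>*\<theta>*x)) \<in> borel_measurable lborel"
    by (rule measurable_compose[OF _ a_delta_power_measurable[OF nu b dt]]) simp
  then show "(\<lambda>x. indicator {-pi..pi} (\<delta>*\<theta>*x) * (a_delta \<nu> \<delta> b \<theta> (\<delta>*\<theta>*x))^p * F x)
               \<in> borel_measurable lborel"
    using \<open>F \<in> borel_measurable lborel\<close> by simp
  fix x
  show "norm (indicator {-pi..pi} (\<delta>*\<theta>*x) * (a_delta \<nu> \<delta> b \<theta> (\<delta>*\<theta>*x))^p * F x) \<le> F x"
  proof (cases "\<delta>*\<theta>*x \<in> {-pi..pi}")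
    case True
    then have "\<bar>\<delta>*\<theta>*x\<bar> \<le> pi" by auto
    note a = a_delta_bounds(1,2)[OF dt nu this b]
    have "(a_delta \<nu> \<delta> b \<theta> (\<delta>*\<theta>*x))^p * F x \<le> 1 * F x"
      using a F0[of x] by (intro mult_right_mono power_le_one) auto
    then show ?thesis using True a F0[of x] by (simp add: abs_mult)
  qed (use F0 in simp)
next
  fix x
  have "((\<lambda>\<delta>. (a_delta \<nu> \<delta> b \<theta> (\<delta>*\<theta>*x))^p * F x) \<longlongrightarrow> 1^p * F x) (at_right 0)"
    by (intro tendsto_intros a_delta_rescaled_tendsto_1[OF nu b th])
  moreover have "\<forall>\<^sub>F \<delta> in at_right 0. (a_delta \<nu> \<delta> b \<theta> (\<delta>*\<theta>*x))^p * F x =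
                    indicator {-pi..pi} (\<delta>*\<theta>*x) * (a_delta \<nu> \<delta> b \<theta> (\<delta>*\<theta>*x))^p * F x"
    using eventually_rescaled_in_period[OF th, of x]
    by eventually_elim (auto simp: indicator_def abs_le_iff)
  ultimately show "((\<lambda>\<delta>. indicator {-pi..pi} (\<delta>*\<theta>*x) * (a_delta \<nu> \<delta> b \<theta> (\<delta>*\<theta>*x))^p * F x)
                     \<longlongrightarrow> F x) (at_right 0)"
    by (simp add: tendsto_cong)
qed

lemma a_delta_power_integral_asymp:
  assumes nu: "\<nu> > 1/2" and b: "b > 0" and th: "\<theta> > 0"
    and Fint: "integrable lborel F" and F0: "\<And>x. F x \<ge> 0" and Fpos: "integral\<^sup>L lborel F > 0"
  shows "(\<lambda>\<delta>. LBINT l=-pi..pi. (a_delta \<nu> \<delta> b \<theta> l)^p * F (l / (\<delta>*\<theta>)))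
            \<sim>[at_right 0] (\<lambda>\<delta>. \<delta> * \<theta> * integral\<^sup>L lborel F)"
proof (rule asymp_equivI')
  define J where "J \<delta> = (\<integral>x. indicator {-pi..pi} (\<delta>*\<theta>*x) * (a_delta \<nu> \<delta> b \<theta> (\<delta>*\<theta>*x))^p * F x \<partial>lborel)"
    for \<delta>
  have "((\<lambda>\<delta>. J \<delta> / integral\<^sup>L lborel F) \<longlongrightarrow> integral\<^sup>L lborel F / integral\<^sup>L lborel F) (at_right 0)"
    unfolding J_def using Fpos by (intro tendsto_divide rescaled_integral_tendsto[OF nu b th Fint F0]) auto
  then have "((\<lambda>\<delta>. J \<delta> / integral\<^sup>L lborel F) \<longlongrightarrow> 1) (at_right 0)" using Fpos by simp
  moreover have "\<forall>\<^sub>F \<delta> in at_right 0. J \<delta> / integral\<^sup>L lborel F =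
      (LBINT l=-pi..pi. (a_delta \<nu> \<delta> b \<theta> l)^p * F (l / (\<delta>*\<theta>))) / (\<delta> * \<theta> * integral\<^sup>L lborel F)"
    using eventually_at_right_less[of 0]
  proof eventually_elim
    case (elim \<delta>)
    then have "\<delta>*\<theta> > 0" using th by simp
    then have "(LBINT l=-pi..pi. (a_delta \<nu> \<delta> b \<theta> l)^p * F (l / (\<delta>*\<theta>))) = \<delta>*\<theta> * J \<delta>"
      unfolding J_def by (rule lbint_rescaled_weight)
    then show ?case using elim th by simp
  qed
  ultimately show "((\<lambda>\<delta>. (LBINT l=-pi..pi. (a_delta \<nu> \<delta> b \<theta> l)^p * F (l / (\<delta>*\<theta>))) /
                        (\<delta> * \<theta> * integral\<^sup>L lborel F)) \<longlongrightarrow> 1) (at_right 0)"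
    by (simp add: tendsto_cong)
qed

theorem lemma5p3:
  fixes \<nu> b \<theta> :: real and F :: "real \<Rightarrow> real"
  assumes "\<nu> > 1/2" and "b > 0" and "\<theta> > 0"
    and "continuous_on UNIV F" and "\<And>x. F x \<ge> 0"
    and "integrable lborel F" and "integral\<^sup>L lborel F > 0"
  shows "((\<lambda>\<delta>. LBINT l=-pi..pi. a_delta \<nu> \<delta> b \<theta> l * F (l / (\<delta>*\<theta>)))
            \<sim>[at_right 0] (\<lambda>\<delta>. \<delta> * \<theta> * integral\<^sup>L lborel F)) \<and>
         ((\<lambda>\<delta>. LBINT l=-pi..pi. (a_delta \<nu> \<delta> b \<theta> l)^2 * F (l / (\<delta>*\<theta>)))
            \<sim>[at_right 0] (\<lambda>\<delta>. \<delta> * \<theta> * integral\<^sup>L lborel F))"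
  using a_delta_power_integral_asymp[OF assms(1,2,3,6,5,7), of 1]
    a_delta_power_integral_asymp[OF assms(1,2,3,6,5,7), of 2]
  by simp

end
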